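(* Let $a,b,n$ be positive integers with $a\le b$. If a $(b,a,n)$ strategy exists, then a $(b,\lfloor b/a\rfloor\cdot n)$ strategy for the GKS game exists.
   Context: The GKS game with parameter $n$ (a positive integer). A strategy pair $(S,T)$ consists of a function $S$ assigning a bit in $\{0,1\}$ to every sequence $\pi_1\pi_2\ldots\pi_i$ of distinct elements of $[n]=\{1,\dots,n\}$ with $1\le i\le n-1$, and a function $T:\{0,1\}^n\to 2^{[n]}$. For a permutation $\pi=\pi_1\ldots\pi_n$ of $[n]$ and a bit $b$, the final array $A_{\rm final}\in\{0,1\}^n$ is defined by $A_{\rm final}[\pi_i]=S(\pi_1\ldots\pi_i)$ for $1\le i\le n-1$ and $A_{\rm final}[\pi_n]=b$. The pair $(S,T)$ is a $(k,n)$ strategy if for every permutation $\pi$ of $[n]$ and every bit $b$ we have $\pi_n\in T(A_{\rm final})$, and moreover $|T(\sigma)|\le k$ for every $\sigma\in\{0,1\}^n$. A $(k,k_A,n)$ strategy is a $(k,n)$ strategy $(S,T)$ in which $S$ is additionally defined on all full permutations $\pi_1\ldots\pi_n$ of $[n]$ ("Alice-mode"), such that, letting $\mathcal{O}_A$ be the set of all arrays $A\in\{0,1\}^n$ with $A[\pi_i]=S(\pi_1\ldots\pi_i)$ for all $1\le i\le n$, for some permutation $\pi$ of $[n]$, we have $|T(\sigma)|\le k_A$ for every $\sigma\in\mathcal{O}_A$. *)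

theory Defs
  imports Main
begin

(* Elements of [n] are the naturals 1..n.
   An array in {0,1}^n is a bool list of length n; position j in [n] is
   stored at list index j-1. *)

definition perms :: "nat \<Rightarrow> nat list set" where
  "perms n = {\<pi>. distinct \<pi> \<and> set \<pi> = {1..n}}"

definition is_final_array :: "nat \<Rightarrow> (nat list \<Rightarrow> bool) \<Rightarrow> nat list \<Rightarrow> bool \<Rightarrow> bool list \<Rightarrow> bool" where
  "is_final_array n S \<pi> b A \<longleftrightarrow>
     length A = n \<and>
     (\<forall>i. i + 1 < n \<longrightarrow> A ! (\<pi> ! i - 1) = S (take (i + 1) \<pi>)) \<and>
     A ! (\<pi> ! (n - 1) - 1) = b"

definition kn_strategy :: "nat \<Rightarrow> nat \<Rightarrow> (nat list \<Rightarrow> bool) \<Rightarrow> (bool list \<Rightarrow> nat set) \<Rightarrow> bool" where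
  "kn_strategy k n S T \<longleftrightarrow>
     (\<forall>\<pi>\<in>perms n. \<forall>b A. is_final_array n S \<pi> b A \<longrightarrow> \<pi> ! (n - 1) \<in> T A) \<and>
     (\<forall>\<sigma>. length \<sigma> = n \<longrightarrow> T \<sigma> \<subseteq> {1..n} \<and> card (T \<sigma>) \<le> k)"

definition alice_outcomes :: "nat \<Rightarrow> (nat list \<Rightarrow> bool) \<Rightarrow> bool list set" where
  "alice_outcomes n S = {A. length A = n \<and>
     (\<exists>\<pi>\<in>perms n. \<forall>i<n. A ! (\<pi> ! i - 1) = S (take (i + 1) \<pi>))}"

definition kkA_strategy :: "nat \<Rightarrow> nat \<Rightarrow> nat \<Rightarrow> (nat list \<Rightarrow> bool) \<Rightarrow> (bool list \<Rightarrow> nat set) \<Rightarrow> bool" where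
  "kkA_strategy k kA n S T \<longleftrightarrow>
     kn_strategy k n S T \<and> (\<forall>\<sigma>\<in>alice_outcomes n S. card (T \<sigma>) \<le> kA)"

end

theory Submission
  imports Defs
begin

text \<open>With \<open>m = \<lfloor>b / a\<rfloor>\<close>, split \<open>[m n]\<close> into \<open>m\<close> consecutive blocks of size \<open>n\<close>.
  The combined strategy plays \<open>S\<close> independently inside the block of the cell just revealed, so
  every block in which the hidden last cell does not lie is completely filled by \<open>S\<close> and is an
  Alice-mode outcome, while the block containing the last cell is an ordinary play of the
  \<open>(b,n)\<close> game. The guesser answers \<open>T\<close> on the unique block whose guess set exceeds \<open>a\<close>
  elements if there is one; otherwise the union of all \<open>m\<close> guess sets has at most
  \<open>m a \<le> b\<close> elements.\<close>

definition block :: "nat \<Rightarrow> nat \<Rightarrow> nat" where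
  "block n x = (x - 1) div n"

definition local_pos :: "nat \<Rightarrow> nat \<Rightarrow> nat" where
  "local_pos n x = (x - 1) mod n + 1"

definition block_restrict :: "nat \<Rightarrow> nat \<Rightarrow> nat list \<Rightarrow> nat list" where
  "block_restrict n j \<pi> = map (local_pos n) (filter (\<lambda>x. block n x = j) \<pi>)"

definition block_strategy :: "nat \<Rightarrow> (nat list \<Rightarrow> bool) \<Rightarrow> nat list \<Rightarrow> bool" where
  "block_strategy n S p = S (block_restrict n (block n (last p)) p)"

definition block_array :: "nat \<Rightarrow> bool list \<Rightarrow> nat \<Rightarrow> bool list" where
  "block_array n A j = take n (drop (j * n) A)"

definition shifted_guess :: "nat \<Rightarrow> (bool list \<Rightarrow> nat set) \<Rightarrow> bool list \<Rightarrow> nat \<Rightarrow> nat set" where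
  "shifted_guess n T A j = (\<lambda>l. j * n + l) ` T (block_array n A j)"

definition block_guess :: "nat \<Rightarrow> nat \<Rightarrow> nat \<Rightarrow> (bool list \<Rightarrow> nat set) \<Rightarrow> bool list \<Rightarrow> nat set" where
  "block_guess m n a T A =
     (if \<exists>j<m. a < card (T (block_array n A j))
      then shifted_guess n T A (SOME j. j < m \<and> a < card (T (block_array n A j)))
      else (\<Union>j<m. shifted_guess n T A j))"

lemma block_local_pos_decomp: "0 < x \<Longrightarrow> block n x * n + local_pos n x = x"
  unfolding block_def local_pos_def using div_mult_mod_eq[of "x - 1" n] by simp

lemma local_pos_range: "0 < n \<Longrightarrow> local_pos n x \<in> {1..n}"
  unfolding local_pos_def by (simp add: Suc_leI)

lemma
  assumes "l \<in> {1..n}"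
  shows block_shift: "block n (j * n + l) = j"
    and local_pos_shift: "local_pos n (j * n + l) = l"
proof -
  obtain r where "l = Suc r" "r < n" using assms by (cases l) auto
  then show "block n (j * n + l) = j" "local_pos n (j * n + l) = l"
    unfolding block_def local_pos_def by simp_all
qed

lemma block_less: "x \<in> {1..m * n} \<Longrightarrow> block n x < m"
  unfolding block_def by (auto intro: less_mult_imp_div_less)

lemma block_end_le: "j < m \<Longrightarrow> j * n + n \<le> m * (n :: nat)"
  by (metis Suc_leI add.commute mult_Suc mult_le_mono1)

lemma block_elements:
  assumes "0 < n" "j < m"
  shows "{x \<in> {1..m * n}. block n x = j} = (\<lambda>l. j * n + l) ` {1..n}"
proof (intro set_eqI iffI)
  fix x assume "x \<in> {x \<in> {1..m * n}. block n x = j}"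
  then have "x = j * n + local_pos n x" using block_local_pos_decomp[of x n] by auto
  then show "x \<in> (\<lambda>l. j * n + l) ` {1..n}" using local_pos_range[OF assms(1)] by blast
next
  fix x assume "x \<in> (\<lambda>l. j * n + l) ` {1..n}"
  then obtain l where l: "l \<in> {1..n}" "x = j * n + l" by blast
  then show "x \<in> {x \<in> {1..m * n}. block n x = j}"
    using block_shift[OF l(1)] block_end_le[OF assms(2), of n] by auto
qed

lemma perms_length: "\<pi> \<in> perms N \<Longrightarrow> length \<pi> = N"
  unfolding perms_def using distinct_card[of \<pi>] by simp

lemma perms_nth: "\<pi> \<in> perms N \<Longrightarrow> i < N \<Longrightarrow> \<pi> ! i \<in> {1..N}"
  using nth_mem[of i \<pi>] perms_length[of \<pi> N] unfolding perms_def by auto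

lemma perms_last: "\<pi> \<in> perms N \<Longrightarrow> 0 < N \<Longrightarrow> last \<pi> = \<pi> ! (N - 1)"
  using perms_length[of \<pi> N] by (auto simp: last_conv_nth)

lemma perms_last_mem: "\<pi> \<in> perms N \<Longrightarrow> 0 < N \<Longrightarrow> last \<pi> \<in> {1..N}"
  using perms_last[of \<pi> N] perms_nth[of \<pi> N "N - 1"] by simp

lemma block_restrict_perms:
  assumes "0 < n" "\<pi> \<in> perms (m * n)" "j < m"
  shows "block_restrict n j \<pi> \<in> perms n"
proof -
  have set_filter: "set (filter (\<lambda>x. block n x = j) \<pi>) = (\<lambda>l. j * n + l) ` {1..n}"
    using assms(2) block_elements[OF assms(1,3)] unfolding perms_def by auto
  have inj: "inj_on (local_pos n) ((\<lambda>l. j * n + l) ` {1..n})"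
    by (rule inj_on_inverseI[where g = "\<lambda>l. j * n + l"]) (erule imageE, simp add: local_pos_shift)
  have "local_pos n ` (\<lambda>l. j * n + l) ` {1..n} = (\<lambda>l. l) ` {1..n}"
    unfolding image_image by (rule image_cong) (simp_all add: local_pos_shift)
  then show ?thesis
    using assms(2) set_filter inj unfolding perms_def block_restrict_def by (simp add: distinct_map)
qed

lemma nth_filter_take_Suc:
  "k < length (filter P xs) \<Longrightarrow>
     \<exists>i<length xs. filter P xs ! k = xs ! i \<and> take (Suc k) (filter P xs) = filter P (take (Suc i) xs)"
proof (induction xs arbitrary: k)
  case Nil
  then show ?case by simp
next
  case (Cons x xs)
  show ?case
  proof (cases "P x")
    case True
    show ?thesis
    proof (cases k)
      case 0
      then show ?thesis using True by (intro exI[of _ 0]) auto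
    next
      case (Suc k')
      then have "k' < length (filter P xs)" using Cons.prems True by simp
      from Cons.IH[OF this] obtain i where "i < length xs" "filter P xs ! k' = xs ! i"
        "take (Suc k') (filter P xs) = filter P (take (Suc i) xs)" by blast
      then show ?thesis using True Suc by (intro exI[of _ "Suc i"]) auto
    qed
  next
    case False
    then have "k < length (filter P xs)" using Cons.prems by simp
    from Cons.IH[OF this] obtain i where "i < length xs" "filter P xs ! k = xs ! i"
      "take (Suc k) (filter P xs) = filter P (take (Suc i) xs)" by blast
    then show ?thesis using False by (intro exI[of _ "Suc i"]) auto
  qed
qed

lemma block_restrict_nth:
  assumes "0 < n" "\<pi> \<in> perms (m * n)" "j < m" "k < n"
  shows "\<exists>i<length \<pi>. \<pi> ! i = j * n + block_restrict n j \<pi> ! k \<and>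
           take (Suc k) (block_restrict n j \<pi>) = block_restrict n j (take (Suc i) \<pi>)"
proof -
  let ?P = "\<lambda>x. block n x = j"
  have "k < length (filter ?P \<pi>)"
    using perms_length[OF block_restrict_perms[OF assms(1-3)]] assms(4)
    unfolding block_restrict_def by simp
  with nth_filter_take_Suc obtain i where i: "i < length \<pi>" "filter ?P \<pi> ! k = \<pi> ! i"
    "take (Suc k) (filter ?P \<pi>) = filter ?P (take (Suc i) \<pi>)" by blast
  have "\<pi> ! i \<in> set (filter ?P \<pi>)" using i(2) \<open>k < length _\<close> by (metis nth_mem)
  moreover have "0 < \<pi> ! i" using assms(2) i(1) unfolding perms_def by (auto dest: nth_mem)
  ultimately have "\<pi> ! i = j * n + local_pos n (\<pi> ! i)" using block_local_pos_decomp by force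
  then show ?thesis
    using i \<open>k < length _\<close> unfolding block_restrict_def by (auto simp: take_map)
qed

lemma block_restrict_last:
  "\<pi> \<noteq> [] \<Longrightarrow> last (block_restrict n (block n (last \<pi>)) \<pi>) = local_pos n (last \<pi>)"
  unfolding block_restrict_def by (induction \<pi> rule: rev_induct) auto

lemma block_restrict_last_nth:
  assumes n: "0 < n" and m: "0 < m" and \<pi>: "\<pi> \<in> perms (m * n)"
  shows "block_restrict n (block n (last \<pi>)) \<pi> ! (n - 1) = local_pos n (last \<pi>)"
proof -
  let ?\<rho> = "block_restrict n (block n (last \<pi>)) \<pi>"
  have "last \<pi> \<in> {1..m * n}" using perms_last_mem[OF \<pi>] n m by simp
  then have "?\<rho> \<in> perms n" using block_restrict_perms[OF n \<pi>] block_less by blast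
  then have "length ?\<rho> = n" by (rule perms_length)
  moreover have "\<pi> \<noteq> []" using perms_length[OF \<pi>] n m by auto
  ultimately show ?thesis using block_restrict_last n by (metis last_conv_nth length_0_conv not_less0)
qed

lemma block_array_length: "length A = m * n \<Longrightarrow> j < m \<Longrightarrow> length (block_array n A j) = n"
  unfolding block_array_def using block_end_le[of j m n] by simp

lemma block_array_nth:
  assumes "length A = m * n" "j < m" "l \<in> {1..n}"
  shows "block_array n A j ! (l - 1) = A ! (j * n + l - 1)"
proof -
  have "l - 1 < n" "j * n + (l - 1) < length A" using assms block_end_le[of j m n] by auto
  then show ?thesis using assms(3) unfolding block_array_def by simp
qed

lemma block_strategy_take:
  "i < length \<pi> \<Longrightarrow>
     block_strategy n S (take (Suc i) \<pi>) = S (block_restrict n (block n (\<pi> ! i)) (take (Suc i) \<pi>))"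
  unfolding block_strategy_def by (simp add: take_Suc_conv_app_nth)

lemma block_play:
  assumes n: "0 < n" and \<pi>: "\<pi> \<in> perms (m * n)" and j: "j < m" and k: "k < n"
    and final: "is_final_array (m * n) (block_strategy n S) \<pi> \<beta> A"
    and not_last: "j * n + block_restrict n j \<pi> ! k \<noteq> last \<pi>"
  shows "block_array n A j ! (block_restrict n j \<pi> ! k - 1) = S (take (Suc k) (block_restrict n j \<pi>))"
proof -
  let ?\<rho> = "block_restrict n j \<pi>"
  obtain i where i: "i < length \<pi>" "\<pi> ! i = j * n + ?\<rho> ! k"
    "take (Suc k) ?\<rho> = block_restrict n j (take (Suc i) \<pi>)"
    using block_restrict_nth[OF n \<pi> j k] by blast
  have len: "length \<pi> = m * n" by (rule perms_length[OF \<pi>])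
  have "\<pi> \<noteq> []" using i(1) by auto
  then have "last \<pi> = \<pi> ! (m * n - 1)" using len by (simp add: last_conv_nth)
  then have "i \<noteq> m * n - 1" using i(2) not_last by auto
  then have "i + 1 < m * n" using i(1) len by linarith
  have \<rho>k: "?\<rho> ! k \<in> {1..n}" using perms_nth[OF block_restrict_perms[OF n \<pi> j] k] .
  have "block_array n A j ! (?\<rho> ! k - 1) = A ! (\<pi> ! i - 1)"
    using block_array_nth[OF _ j \<rho>k] final i(2) unfolding is_final_array_def by simp
  also have "\<dots> = block_strategy n S (take (Suc i) \<pi>)"
    using final \<open>i + 1 < m * n\<close> unfolding is_final_array_def by simp
  also have "\<dots> = S (take (Suc k) ?\<rho>)"
    using block_strategy_take[OF i(1)] i(3) block_shift[OF \<rho>k] i(2) by simp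
  finally show ?thesis .
qed

lemma block_array_alice_outcome:
  assumes n: "0 < n" and \<pi>: "\<pi> \<in> perms (m * n)" and j: "j < m" and other: "j \<noteq> block n (last \<pi>)"
    and final: "is_final_array (m * n) (block_strategy n S) \<pi> \<beta> A"
  shows "block_array n A j \<in> alice_outcomes n S"
  unfolding alice_outcomes_def
proof (intro CollectI conjI bexI allI impI)
  show "length (block_array n A j) = n"
    using final j block_array_length unfolding is_final_array_def by blast
  show "block_restrict n j \<pi> \<in> perms n" by (rule block_restrict_perms[OF n \<pi> j])
  fix k assume k: "k < n"
  then have "block_restrict n j \<pi> ! k \<in> {1..n}"
    using perms_nth[OF \<open>block_restrict n j \<pi> \<in> perms n\<close>] by blast
  then have "j * n + block_restrict n j \<pi> ! k \<noteq> last \<pi>" using other block_shift by metis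
  then show "block_array n A j ! (block_restrict n j \<pi> ! k - 1) = S (take (k + 1) (block_restrict n j \<pi>))"
    using block_play[OF n \<pi> j k final] by simp
qed

lemma block_array_final:
  assumes n: "0 < n" and m: "0 < m" and \<pi>: "\<pi> \<in> perms (m * n)"
    and final: "is_final_array (m * n) (block_strategy n S) \<pi> \<beta> A"
  defines "j \<equiv> block n (last \<pi>)"
  shows "is_final_array n S (block_restrict n j \<pi>) \<beta> (block_array n A j)"
proof -
  let ?\<rho> = "block_restrict n j \<pi>"
  have last_mem: "last \<pi> \<in> {1..m * n}" using perms_last_mem[OF \<pi>] n m by simp
  then have jm: "j < m" unfolding j_def by (rule block_less)
  have \<rho>: "?\<rho> \<in> perms n" by (rule block_restrict_perms[OF n \<pi> jm])
  have \<rho>_last: "?\<rho> ! (n - 1) = local_pos n (last \<pi>)"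
    unfolding j_def by (rule block_restrict_last_nth[OF n m \<pi>])
  have last_decomp: "j * n + local_pos n (last \<pi>) = last \<pi>"
    using block_local_pos_decomp[of "last \<pi>" n] last_mem unfolding j_def by simp
  have lenA: "length A = m * n" using final unfolding is_final_array_def by simp
  show ?thesis
    unfolding is_final_array_def
  proof (intro conjI allI impI)
    show "length (block_array n A j) = n" by (rule block_array_length[OF lenA jm])
    fix k assume k: "k + 1 < n"
    have "?\<rho> ! k \<noteq> ?\<rho> ! (n - 1)"
      using \<rho> k perms_length[OF \<rho>] unfolding perms_def by (simp add: nth_eq_iff_index_eq)
    then have "j * n + ?\<rho> ! k \<noteq> last \<pi>" using \<rho>_last last_decomp by (metis add_left_cancel)
    then show "block_array n A j ! (?\<rho> ! k - 1) = S (take (k + 1) ?\<rho>)"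
      using block_play[OF n \<pi> jm _ final] k by simp
  next
    have "block_array n A j ! (?\<rho> ! (n - 1) - 1) = A ! (last \<pi> - 1)"
      using block_array_nth[OF lenA jm local_pos_range[OF n]] \<rho>_last last_decomp by simp
    also have "\<dots> = \<beta>"
      using final perms_last[OF \<pi>] n m unfolding is_final_array_def by simp
    finally show "block_array n A j ! (?\<rho> ! (n - 1) - 1) = \<beta>" .
  qed
qed

lemma card_shifted_guess: "card (shifted_guess n T A j) = card (T (block_array n A j))"
  unfolding shifted_guess_def by (simp add: card_image)

lemma shifted_guess_subset:
  assumes "kn_strategy k n S T" "length A = m * n" "j < m"
  shows "shifted_guess n T A j \<subseteq> {1..m * n}"
proof -
  have "T (block_array n A j) \<subseteq> {1..n}"
    using assms block_array_length unfolding kn_strategy_def by blast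
  moreover have "j * n + n \<le> m * n" using assms(3) by (rule block_end_le)
  ultimately show ?thesis unfolding shifted_guess_def by force
qed

lemma block_guess_bounds:
  assumes T: "kn_strategy b n S T" and ma: "m * a \<le> b" and A: "length A = m * n"
  shows "block_guess m n a T A \<subseteq> {1..m * n} \<and> card (block_guess m n a T A) \<le> b"
proof (cases "\<exists>j<m. a < card (T (block_array n A j))")
  case True
  define j where "j = (SOME j. j < m \<and> a < card (T (block_array n A j)))"
  have "j < m" using someI_ex[OF True] unfolding j_def by blast
  moreover have "block_guess m n a T A = shifted_guess n T A j"
    using True unfolding block_guess_def j_def by simp
  moreover have "card (T (block_array n A j)) \<le> b"
    using T block_array_length[OF A \<open>j < m\<close>] unfolding kn_strategy_def by blast
  ultimately show ?thesis using shifted_guess_subset[OF T A] by (simp add: card_shifted_guess)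
next
  case False
  have "card (\<Union>j<m. shifted_guess n T A j) \<le> (\<Sum>j<m. card (shifted_guess n T A j))"
    by (rule card_UN_le) simp
  also have "\<dots> \<le> (\<Sum>j<m. a)"
  proof (rule sum_mono)
    fix j assume "j \<in> {..<m}"
    then have "\<not> a < card (T (block_array n A j))" using False by blast
    then show "card (shifted_guess n T A j) \<le> a" by (simp add: card_shifted_guess)
  qed
  finally have "card (\<Union>j<m. shifted_guess n T A j) \<le> b" using ma by (simp add: mult.commute)
  then show ?thesis
    using False shifted_guess_subset[OF T A] unfolding block_guess_def by auto
qed

lemma block_guess_wins:
  assumes "j0 < m" and small: "\<forall>j<m. j \<noteq> j0 \<longrightarrow> card (T (block_array n A j)) \<le> a"
    and "x \<in> shifted_guess n T A j0"
  shows "x \<in> block_guess m n a T A"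
proof (cases "\<exists>j<m. a < card (T (block_array n A j))")
  case True
  then have "(SOME j. j < m \<and> a < card (T (block_array n A j))) = j0"
    using someI_ex[OF True] small by fastforce
  then show ?thesis using True assms unfolding block_guess_def by simp
next
  case False
  then show ?thesis using assms unfolding block_guess_def by auto
qed

lemma kn_strategy_block:
  assumes st: "kkA_strategy b a n S T" and n: "0 < n" and m: "0 < m" and ma: "m * a \<le> b"
  shows "kn_strategy b (m * n) (block_strategy n S) (block_guess m n a T)"
  unfolding kn_strategy_def
proof (intro conjI ballI allI impI)
  have T: "kn_strategy b n S T" using st unfolding kkA_strategy_def by blast
  fix \<sigma> :: "bool list" assume "length \<sigma> = m * n"
  then show "block_guess m n a T \<sigma> \<subseteq> {1..m * n}" "card (block_guess m n a T \<sigma>) \<le> b"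
    using block_guess_bounds[OF T ma] by blast+
next
  fix \<pi> \<beta> A assume \<pi>: "\<pi> \<in> perms (m * n)"
    and final: "is_final_array (m * n) (block_strategy n S) \<pi> \<beta> A"
  define j0 where "j0 = block n (last \<pi>)"
  have last_mem: "last \<pi> \<in> {1..m * n}" using perms_last_mem[OF \<pi>] n m by simp
  then have j0: "j0 < m" unfolding j0_def by (rule block_less)
  have "block_restrict n j0 \<pi> ! (n - 1) \<in> T (block_array n A j0)"
    using st block_array_final[OF n m \<pi> final] block_restrict_perms[OF n \<pi> j0]
    unfolding kkA_strategy_def kn_strategy_def j0_def by blast
  then have "local_pos n (last \<pi>) \<in> T (block_array n A j0)"
    using block_restrict_last_nth[OF n m \<pi>] unfolding j0_def by simp
  moreover have "j0 * n + local_pos n (last \<pi>) = last \<pi>"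
    using block_local_pos_decomp[of "last \<pi>" n] last_mem unfolding j0_def by simp
  ultimately have "last \<pi> \<in> shifted_guess n T A j0" unfolding shifted_guess_def by force
  moreover have "\<forall>j<m. j \<noteq> j0 \<longrightarrow> card (T (block_array n A j)) \<le> a"
    using st block_array_alice_outcome[OF n \<pi> _ _ final] unfolding kkA_strategy_def j0_def by blast
  ultimately have "last \<pi> \<in> block_guess m n a T A" using block_guess_wins[OF j0] by blast
  then show "\<pi> ! (m * n - 1) \<in> block_guess m n a T A" using perms_last[OF \<pi>] n m by simp
qed

theorem lemma4:
  fixes a b n :: nat
  assumes "0 < a" and "0 < b" and "0 < n" and "a \<le> b"
    and "\<exists>S T. kkA_strategy b a n S T"
  shows "\<exists>S T. kn_strategy b (b div a * n) S T"
proof -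
  obtain S T where "kkA_strategy b a n S T" using assms(5) by blast
  moreover have "0 < b div a" using assms(1,4) by (simp add: div_greater_zero_iff)
  moreover have "b div a * a \<le> b" by (simp add: div_times_less_eq_dividend)
  ultimately show ?thesis using kn_strategy_block assms(3) by blast
qed

end
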